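(* If a closure model $\mathcal{M}=((X,\mathcal{C}_R),\mathcal{V})$ is quasi-discrete, finitely closed and finitely backward closed, then for all $x_1,x_2\in X$: $x_1\simeq x_2$ iff $x_1$ and $x_2$ satisfy exactly the same $\mathrm{SLCS}^-$ formulas.
   Context: $\mathcal{C}_R(A)=A\cup\{x\mid\exists a\in A.\ aRx\}$, $\vec{\mathcal{C}}(x)=\mathcal{C}_R(\{x\})$, $\overleftarrow{\mathcal{C}}(x)=\mathcal{C}_{R^{-1}}(\{x\})$, $\mathcal{V}:AP\to\mathcal{P}(X)$, $\mathcal{V}^{-1}(x)=\{p\mid x\in\mathcal{V}(p)\}$; finitely (backward) closed: all $\vec{\mathcal{C}}(x)$ (resp. $\overleftarrow{\mathcal{C}}(x)$) finite. Path: $\pi:\mathbb{N}\to X$ with $\pi[\mathcal{C}_{succ}(N)]\subseteq\mathcal{C}_R(\pi[N])$ for all $N$, $\mathcal{C}_{succ}$ based on $n\mapsto n+1$. $x\models\vec\rho\,\Phi_1[\Phi_2]$ iff some path $\pi$ and $\ell$ have $\pi(0)=x$, $\pi(\ell)\models\Phi_1$, $\pi(j)\models\Phi_2$ for $0<j<\ell$; $x\models\overleftarrow\rho\,\Phi_1[\Phi_2]$ iff some path $\pi$ and $\ell$ have $\pi(\ell)=x$, $\pi(0)\models\Phi_1$, $\pi(j)\models\Phi_2$ for $0<j<\ell$. $\bot=p\land\neg p$. $\mathrm{SLCS}^-$: $\Phi::=p\mid\neg\Phi\mid\Phi\lor\Phi\mid\vec\rho\,\Phi[\bot]\mid\overleftarrow\rho\,\Phi[\bot]$.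 $\simeq$: union of all non-empty equivalence relations $B$ with $(x_1,x_2)\in B\Rightarrow\mathcal{V}^{-1}(x_1)=\mathcal{V}^{-1}(x_2)$ and for all $C\in X/B$, $\vec{\mathcal{C}}(x_1)\cap C\neq\emptyset\iff\vec{\mathcal{C}}(x_2)\cap C\neq\emptyset$ and $\overleftarrow{\mathcal{C}}(x_1)\cap C\neq\emptyset\iff\overleftarrow{\mathcal{C}}(x_2)\cap C\neq\emptyset$. *)

theory Defs
  imports Main
begin

text \<open>Closure model based on a relation R on the carrier (the whole type 'a),
  with valuation V from atomic propositions 'p to sets of points.
  Such a model is quasi-discrete by construction.\<close>

definition clo :: "'a rel \<Rightarrow> 'a set \<Rightarrow> 'a set" where
  "clo R A = A \<union> {x. \<exists>a\<in>A. (a, x) \<in> R}"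

definition fclo :: "'a rel \<Rightarrow> 'a \<Rightarrow> 'a set" where
  "fclo R x = clo R {x}"

definition bclo :: "'a rel \<Rightarrow> 'a \<Rightarrow> 'a set" where
  "bclo R x = clo (R\<inverse>) {x}"

definition finitely_closed :: "'a rel \<Rightarrow> bool" where
  "finitely_closed R \<longleftrightarrow> (\<forall>x. finite (fclo R x))"

definition finitely_backward_closed :: "'a rel \<Rightarrow> bool" where
  "finitely_backward_closed R \<longleftrightarrow> (\<forall>x. finite (bclo R x))"

definition Vinv :: "('p \<Rightarrow> 'a set) \<Rightarrow> 'a \<Rightarrow> 'p set" where
  "Vinv V x = {p. x \<in> V p}"

definition succ_rel :: "nat rel" where
  "succ_rel = {(n, m). m = n + 1}"

definition is_path :: "'a rel \<Rightarrow> (nat \<Rightarrow> 'a) \<Rightarrow> bool" where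
  "is_path R \<pi> \<longleftrightarrow> (\<forall>N. \<pi> ` clo succ_rel N \<subseteq> clo R (\<pi> ` N))"

text \<open>SLCS^- formulas: p | not | or | forward rho Phi[bot] | backward rho Phi[bot].\<close>
datatype 'p slcs = Atom 'p | Neg "'p slcs" | Or "'p slcs" "'p slcs"
  | RhoF "'p slcs" | RhoB "'p slcs"

text \<open>Satisfaction. Since bot = p and not p is never satisfied, the
  condition "pi(j) satisfies bot for 0 < j < l" is written as False.\<close>
fun sat :: "'a rel \<Rightarrow> ('p \<Rightarrow> 'a set) \<Rightarrow> 'a \<Rightarrow> 'p slcs \<Rightarrow> bool" where
  "sat R V x (Atom p) = (x \<in> V p)"
| "sat R V x (Neg \<phi>) = (\<not> sat R V x \<phi>)"
| "sat R V x (Or \<phi> \<psi>) = (sat R V x \<phi> \<or> sat R V x \<psi>)"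
| "sat R V x (RhoF \<phi>) = (\<exists>\<pi> l. is_path R \<pi> \<and> \<pi> 0 = x \<and> sat R V (\<pi> l) \<phi>
        \<and> (\<forall>j. 0 < j \<and> j < l \<longrightarrow> False))"
| "sat R V x (RhoB \<phi>) = (\<exists>\<pi> l. is_path R \<pi> \<and> \<pi> l = x \<and> sat R V (\<pi> 0) \<phi>
        \<and> (\<forall>j. 0 < j \<and> j < l \<longrightarrow> False))"

definition is_bisim :: "'a rel \<Rightarrow> ('p \<Rightarrow> 'a set) \<Rightarrow> 'a rel \<Rightarrow> bool" where
  "is_bisim R V B \<longleftrightarrow> B \<noteq> {} \<and> equiv UNIV B \<and>
     (\<forall>(x1, x2) \<in> B. Vinv V x1 = Vinv V x2 \<and>
        (\<forall>C \<in> UNIV // B.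
           (fclo R x1 \<inter> C \<noteq> {} \<longleftrightarrow> fclo R x2 \<inter> C \<noteq> {}) \<and>
           (bclo R x1 \<inter> C \<noteq> {} \<longleftrightarrow> bclo R x2 \<inter> C \<noteq> {})))"

definition bisimilar :: "'a rel \<Rightarrow> ('p \<Rightarrow> 'a set) \<Rightarrow> 'a rel" where
  "bisimilar R V = \<Union>{B. is_bisim R V B}"

end

theory Submission
  imports Defs
begin

text \<open>Since the until-part of both reachability operators is \<open>\<bottom>\<close>, a witnessing path has length
  at most one, so \<open>\<rho>\<close> and its converse only look at the one-step closures. Formula-equivalence
  then behaves like a bisimulation because the closures are finite: a point of the closure of
  \<open>x\<^sub>1\<close> that is inequivalent to every point of the closure of \<open>x\<^sub>2\<close> is separated from all of them
  by one finite conjunction, and reaching it distinguishes \<open>x\<^sub>1\<close> from \<open>x\<^sub>2\<close>.\<close>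

lemma mem_bclo_iff_mem_fclo: "y \<in> bclo R x \<longleftrightarrow> x \<in> fclo R y"
  unfolding bclo_def fclo_def clo_def by auto

lemma is_path_Suc_mem_fclo:
  assumes "is_path R \<pi>"
  shows "\<pi> (Suc n) \<in> fclo R (\<pi> n)"
proof -
  have "Suc n \<in> clo succ_rel {n}"
    unfolding clo_def succ_rel_def by simp
  then show ?thesis
    using assms unfolding is_path_def fclo_def by fastforce
qed

lemma is_path_step:
  assumes "y \<in> fclo R x"
  shows "is_path R (\<lambda>n. if n = 0 then x else y)"
  using assms unfolding is_path_def fclo_def clo_def succ_rel_def by (auto simp: image_def)

lemma sat_RhoF: "sat R V x (RhoF \<phi>) \<longleftrightarrow> (\<exists>y\<in>fclo R x. sat R V y \<phi>)"
proof
  assume "sat R V x (RhoF \<phi>)"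
  then obtain \<pi> l where \<pi>: "is_path R \<pi>" "\<pi> 0 = x" "sat R V (\<pi> l) \<phi>" and "l \<le> 1"
    by (auto simp: not_less[symmetric])
  then consider "l = 0" | "l = 1" by linarith
  then show "\<exists>y\<in>fclo R x. sat R V y \<phi>"
    by cases (use \<pi> is_path_Suc_mem_fclo[OF \<pi>(1), of 0] in \<open>auto simp: fclo_def clo_def\<close>)
next
  assume "\<exists>y\<in>fclo R x. sat R V y \<phi>"
  then obtain y where "y \<in> fclo R x" "sat R V y \<phi>" by blast
  then show "sat R V x (RhoF \<phi>)"
    using is_path_step by (fastforce intro!: exI[of _ 1])
qed

lemma sat_RhoB: "sat R V x (RhoB \<phi>) \<longleftrightarrow> (\<exists>y\<in>bclo R x. sat R V y \<phi>)"
proof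
  assume "sat R V x (RhoB \<phi>)"
  then obtain \<pi> l where \<pi>: "is_path R \<pi>" "\<pi> l = x" "sat R V (\<pi> 0) \<phi>" and "l \<le> 1"
    by (auto simp: not_less[symmetric])
  then consider "l = 0" | "l = 1" by linarith
  then show "\<exists>y\<in>bclo R x. sat R V y \<phi>"
    by cases (use \<pi> is_path_Suc_mem_fclo[OF \<pi>(1), of 0] in
        \<open>auto simp: mem_bclo_iff_mem_fclo fclo_def clo_def\<close>)
next
  assume "\<exists>y\<in>bclo R x. sat R V y \<phi>"
  then obtain y where "x \<in> fclo R y" "sat R V y \<phi>"
    by (auto simp: mem_bclo_iff_mem_fclo)
  then show "sat R V x (RhoB \<phi>)"
    using is_path_step by (fastforce intro!: exI[of _ 1])
qed

lemma quotient_meets_iff_rel_set: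
  assumes "equiv UNIV B"
  shows "(\<forall>C\<in>UNIV // B. A \<inter> C \<noteq> {} \<longleftrightarrow> A' \<inter> C \<noteq> {}) \<longleftrightarrow> rel_set (in_rel B) A A'"
proof -
  have sym: "(x, y) \<in> B \<Longrightarrow> (y, x) \<in> B" and trans: "(x, y) \<in> B \<Longrightarrow> (y, z) \<in> B \<Longrightarrow> (x, z) \<in> B"
    and refl: "(x, x) \<in> B" for x y z
    using assms by (auto elim: equivE symE transE simp: refl_on_def)
  have meets: "A \<inter> B `` {c} \<noteq> {} \<longleftrightarrow> (\<exists>y\<in>A. (y, c) \<in> B)" for A c
    using sym by blast
  have "(\<forall>C\<in>UNIV // B. A \<inter> C \<noteq> {} \<longleftrightarrow> A' \<inter> C \<noteq> {}) \<longleftrightarrow>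
      (\<forall>c. (\<exists>y\<in>A. (y, c) \<in> B) \<longleftrightarrow> (\<exists>z\<in>A'. (z, c) \<in> B))"
    unfolding quotient_def meets[symmetric] by blast
  also have "\<dots> \<longleftrightarrow> rel_set (in_rel B) A A'"
    unfolding rel_set_def in_rel_def using sym trans refl by meson
  finally show ?thesis .
qed

lemma is_bisim_iff:
  "is_bisim R V B \<longleftrightarrow> B \<noteq> {} \<and> equiv UNIV B \<and>
     (\<forall>(a, b) \<in> B. Vinv V a = Vinv V b \<and>
        rel_set (in_rel B) (fclo R a) (fclo R b) \<and> rel_set (in_rel B) (bclo R a) (bclo R b))"
proof (cases "equiv UNIV B")
  case True
  show ?thesis
    unfolding is_bisim_def quotient_meets_iff_rel_set[OF True, symmetric]
    by (simp add: ball_conj_distrib del: in_rel_def)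
qed (simp add: is_bisim_def)

lemma rel_set_Bex_iff:
  assumes "rel_set Q A A'" "\<And>y z. Q y z \<Longrightarrow> P y \<longleftrightarrow> P' z"
  shows "(\<exists>y\<in>A. P y) \<longleftrightarrow> (\<exists>z\<in>A'. P' z)"
  using assms unfolding rel_set_def by metis

lemma is_bisim_sat_iff:
  assumes "is_bisim R V B" "(a, b) \<in> B"
  shows "sat R V a \<phi> \<longleftrightarrow> sat R V b \<phi>"
  using assms(2)
proof (induction \<phi> arbitrary: a b)
  case (Atom p)
  then show ?case
    using assms(1) by (auto simp: is_bisim_iff Vinv_def)
next
  case (RhoF \<phi>)
  then have "rel_set (in_rel B) (fclo R a) (fclo R b)"
    using assms(1) by (auto simp: is_bisim_iff simp del: in_rel_def)
  then show ?case
    unfolding sat_RhoF using RhoF.IH by (rule rel_set_Bex_iff) simp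
next
  case (RhoB \<phi>)
  then have "rel_set (in_rel B) (bclo R a) (bclo R b)"
    using assms(1) by (auto simp: is_bisim_iff simp del: in_rel_def)
  then show ?case
    unfolding sat_RhoB using RhoB.IH by (rule rel_set_Bex_iff) simp
qed simp_all

definition sat_equiv :: "'a rel \<Rightarrow> ('p \<Rightarrow> 'a set) \<Rightarrow> 'a rel" where
  "sat_equiv R V = {(a, b). \<forall>\<phi>. sat R V a \<phi> \<longleftrightarrow> sat R V b \<phi>}"

lemma equiv_sat_equiv: "equiv UNIV (sat_equiv R V)"
  unfolding sat_equiv_def by (auto intro!: equivI refl_onI symI transI)

lemma finite_separating_formula:
  assumes "finite S" "\<forall>z\<in>S. (y, z) \<notin> sat_equiv R V"
  shows "\<exists>\<psi>. sat R V y \<psi> \<and> (\<forall>z\<in>S. \<not> sat R V z \<psi>)"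
  using assms
proof (induction S rule: finite_induct)
  case empty
  show ?case
    by (rule exI[of _ "Or (Atom p) (Neg (Atom p))" for p]) simp
next
  case (insert z S)
  then obtain \<psi> where \<psi>: "sat R V y \<psi>" "\<forall>z\<in>S. \<not> sat R V z \<psi>"
    by auto
  from insert.prems obtain \<phi> where "sat R V y \<phi> \<noteq> sat R V z \<phi>"
    unfolding sat_equiv_def by auto
  then obtain \<chi> where \<chi>: "sat R V y \<chi>" "\<not> sat R V z \<chi>"
    by (metis sat.simps(2))
  have "sat R V x (Neg (Or (Neg \<psi>) (Neg \<chi>))) \<longleftrightarrow> sat R V x \<psi> \<and> sat R V x \<chi>" for x
    by simp
  then show ?case
    using \<psi> \<chi> by blast
qed

text \<open>Stated for an arbitrary closure \<open>f\<close> observed by a modality \<open>K\<close>, to cover both \<open>\<rho>\<close> and its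
  converse.\<close>

lemma sat_equiv_closure_witness:
  assumes "finite (f b)" "(a, b) \<in> sat_equiv R V" "y \<in> f a"
    and K: "\<And>x \<phi>. sat R V x (K \<phi>) \<longleftrightarrow> (\<exists>y\<in>f x. sat R V y \<phi>)"
  shows "\<exists>z\<in>f b. (y, z) \<in> sat_equiv R V"
proof (rule ccontr)
  assume "\<not> ?thesis"
  then obtain \<psi> where "sat R V y \<psi>" "\<forall>z\<in>f b. \<not> sat R V z \<psi>"
    using finite_separating_formula[OF assms(1)] by blast
  then have "sat R V a (K \<psi>)" "\<not> sat R V b (K \<psi>)"
    using \<open>y \<in> f a\<close> by (auto simp: K)
  with assms(2) show False
    unfolding sat_equiv_def by blast
qed

lemma sat_equiv_closure_rel_set:
  assumes "\<And>x. finite (f x)"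
    and "\<And>x \<phi>. sat R V x (K \<phi>) \<longleftrightarrow> (\<exists>y\<in>f x. sat R V y \<phi>)"
    and "(a, b) \<in> sat_equiv R V"
  shows "rel_set (in_rel (sat_equiv R V)) (f a) (f b)"
proof -
  have sym: "(x, y) \<in> sat_equiv R V \<Longrightarrow> (y, x) \<in> sat_equiv R V" for x y
    unfolding sat_equiv_def by simp
  show ?thesis
  proof (rule rel_setI)
    show "\<exists>z\<in>f b. in_rel (sat_equiv R V) y z" if "y \<in> f a" for y
      using sat_equiv_closure_witness[OF assms(1) assms(3) that assms(2)] by simp
    show "\<exists>y\<in>f a. in_rel (sat_equiv R V) y z" if "z \<in> f b" for z
      using sat_equiv_closure_witness[OF assms(1) sym[OF assms(3)] that assms(2)] sym by auto
  qed
qed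

lemma is_bisim_sat_equiv:
  assumes "finitely_closed R" "finitely_backward_closed R"
  shows "is_bisim R V (sat_equiv R V)"
proof -
  have fin: "\<And>x. finite (fclo R x)" "\<And>x. finite (bclo R x)"
    using assms unfolding finitely_closed_def finitely_backward_closed_def by auto
  have "Vinv V a = Vinv V b" if "(a, b) \<in> sat_equiv R V" for a b
    using that[unfolded sat_equiv_def] by (auto simp: Vinv_def dest: spec[of _ "Atom p" for p])
  moreover have "sat_equiv R V \<noteq> {}"
    using equiv_sat_equiv[of R V] by (auto simp: equiv_def refl_on_def)
  moreover note sat_equiv_closure_rel_set[OF fin(1) sat_RhoF]
    sat_equiv_closure_rel_set[OF fin(2) sat_RhoB]
  ultimately show ?thesis
    unfolding is_bisim_iff using equiv_sat_equiv[of R V] by auto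
qed

lemma bisimilar_subset_sat_equiv: "bisimilar R V \<subseteq> sat_equiv R V"
proof (rule subrelI)
  fix a b assume "(a, b) \<in> bisimilar R V"
  then obtain B where "is_bisim R V B" "(a, b) \<in> B"
    unfolding bisimilar_def by blast
  then show "(a, b) \<in> sat_equiv R V"
    unfolding sat_equiv_def by (simp add: is_bisim_sat_iff)
qed

lemma bisimilar_eq_sat_equiv:
  assumes "finitely_closed R" "finitely_backward_closed R"
  shows "bisimilar R V = sat_equiv R V"
  using bisimilar_subset_sat_equiv is_bisim_sat_equiv[OF assms]
  unfolding bisimilar_def by blast

theorem theorem3:
  fixes R :: "'a rel" and V :: "'p \<Rightarrow> 'a set"
  assumes "finitely_closed R" and "finitely_backward_closed R"
  shows "(x1, x2) \<in> bisimilar R V \<longleftrightarrow> (\<forall>\<phi>. sat R V x1 \<phi> \<longleftrightarrow> sat R V x2 \<phi>)"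
  unfolding bisimilar_eq_sat_equiv[OF assms] sat_equiv_def by simp

end
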